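(* Let $n\ge3$, $2\le i\le n-1$, $\mathfrak g=\mathfrak{sp}(n,\mathbb C)$, $\mathfrak q$ of type $C_n(i)$, $\mu=\varepsilon_1+\varepsilon_{i+1}$, $\epsilon_\gamma=\varepsilon_2-\varepsilon_{i+1}$. Then $\mathrm{pr}_{\mathfrak l_\gamma\otimes\mathfrak z(\mathfrak n)}(\tau_2(X_\mu+X_{\epsilon_\gamma}))$ is a highest weight vector for $V(\mu+\epsilon_\gamma)$, the irreducible $\mathfrak l$-submodule of $\mathfrak l_\gamma\otimes\mathfrak z(\mathfrak n)$ with highest weight $\mu+\epsilon_\gamma=\varepsilon_1+\varepsilon_2$.
   Context: $\mathfrak g=\mathfrak{sp}(n,\mathbb C)\subset\mathfrak{gl}(2n,\mathbb C)$; $\hat j=j+n$, $E_{ab}$ matrix units. Cartan $\mathfrak h$ = matrices $\sum_j h_j(E_{jj}-E_{\hat j\hat j})$, $\varepsilon_j$ picks $h_j$. Roots $\pm\varepsilon_j\pm\varepsilon_k$ ($j<k$), $\pm2\varepsilon_j$; positive system with simple roots $\alpha_j=\varepsilon_j-\varepsilon_{j+1}$ ($j<n$), $\alpha_n=2\varepsilon_n$. Root vectors: $X_{\varepsilon_j-\varepsilon_k}=E_{jk}-E_{\hat k\hat j}$ ($j\ne k$), $X_{\varepsilon_j+\varepsilon_k}=E_{j\hat k}+E_{k\hat j}$, $X_{-(\varepsilon_j+\varepsilon_k)}=E_{\hat jk}+E_{\hat kj}$, $X_{2\varepsilon_j}=E_{j\hat j}$, $X_{-2\varepsilon_j}=E_{\hat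 jj}$. Killing form $\kappa=c_0\mathrm{Tr}(XY)$, $c_0>0$. $\mathfrak q=\mathfrak l\oplus\mathfrak n$ is the standard maximal parabolic subalgebra determined by $\alpha_i$; grading $\mathfrak g=\bigoplus_{j=-2}^2\mathfrak g(j)$ by the $\alpha_i$-coefficient, $\mathfrak l=\mathfrak g(0)$, $\Delta(\mathfrak g(1))=\{\varepsilon_j\pm\varepsilon_k:1\le j\le i<k\le n\}$, $\mathfrak z(\mathfrak n)=\mathfrak g(2)$ with roots $\varepsilon_j+\varepsilon_k$ ($j<k\le i$), $2\varepsilon_j$ ($j\le i$). $\mathfrak l=\mathfrak z(\mathfrak l)\oplus\mathfrak l_\gamma\oplus\mathfrak l_{n\gamma}$ with $\mathfrak l_\gamma\cong\mathfrak{sl}(i,\mathbb C)$ (simple roots $\alpha_1,\dots,\alpha_{i-1}$) and $\mathfrak l_{n\gamma}\cong\mathfrak{sp}(n-i,\mathbb C)$ (simple roots $\alpha_{i+1},\dots,\alpha_n$); $\mathrm{pr}_{\mathfrak l_\gamma\otimes\mathfrak z(\mathfrak n)}$ is the projection of $\mathfrak l\otimes\mathfrak z(\mathfrak n)$ onto $\mathfrak l_\gamma\otimes\mathfrak z(\mathfrak n)$ along this decomposition; $\mathfrak l$ acts on tensor products by the usual tensor product action. Highest weight vector means a weight vector of weight $\mu+\epsilon_\gamma$ annihilated by all $X_\alpha$, $\alpha\in\Pi\setminus\{\alpha_i\}$. $\omega=\frac1{c_0}\sum_{j=1}^iX_{-2\varepsilon_j}\otimes X_{2\varepsilon_j}+\frac1{2c_0}\sum_{1\le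 j<k\le i}X_{-(\varepsilon_j+\varepsilon_k)}\otimes X_{\varepsilon_j+\varepsilon_k}$ and $\tau_2(X)=\tfrac12(\mathrm{ad}(X)^2\otimes\mathrm{Id})\omega$ for $X\in\mathfrak g(1)$. *)

theory Defs
  imports Complex_Main
begin

text \<open>Matrices in gl(2n,C) are functions cmat, with rows/columns
indexed by 1..2n; the hat of j is j+n. A tensor in gl(2n)\<otimes>gl(2n) is represented by its
coefficient array: T a b c d is the coefficient of E_ab \<otimes> E_cd.\<close>

type_synonym cmat = "nat \<Rightarrow> nat \<Rightarrow> complex"
type_synonym ctens = "nat \<Rightarrow> nat \<Rightarrow> nat \<Rightarrow> nat \<Rightarrow> complex"

definition mmul :: "nat \<Rightarrow> cmat \<Rightarrow> cmat \<Rightarrow> cmat" where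
  "mmul n A B = (\<lambda>a b. \<Sum>c\<in>{1..2*n}. A a c * B c b)"

definition madd :: "cmat \<Rightarrow> cmat \<Rightarrow> cmat" where
  "madd A B = (\<lambda>a b. A a b + B a b)"

definition msub :: "cmat \<Rightarrow> cmat \<Rightarrow> cmat" where
  "msub A B = (\<lambda>a b. A a b - B a b)"

definition Eunit :: "nat \<Rightarrow> nat \<Rightarrow> cmat" where
  "Eunit a b = (\<lambda>p q. if p = a \<and> q = b then 1 else 0)"

definition ad :: "nat \<Rightarrow> cmat \<Rightarrow> cmat \<Rightarrow> cmat" where
  "ad n X Y = msub (mmul n X Y) (mmul n Y X)"

definition Xdiff :: "nat \<Rightarrow> nat \<Rightarrow> nat \<Rightarrow> cmat" where
  "Xdiff n j k = msub (Eunit j k) (Eunit (k+n) (j+n))"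
definition Xsum :: "nat \<Rightarrow> nat \<Rightarrow> nat \<Rightarrow> cmat" where
  "Xsum n j k = madd (Eunit j (k+n)) (Eunit k (j+n))"
definition Xnegsum :: "nat \<Rightarrow> nat \<Rightarrow> nat \<Rightarrow> cmat" where
  "Xnegsum n j k = madd (Eunit (j+n) k) (Eunit (k+n) j)"
definition X2eps :: "nat \<Rightarrow> nat \<Rightarrow> cmat" where
  "X2eps n j = Eunit j (j+n)"
definition Xneg2eps :: "nat \<Rightarrow> nat \<Rightarrow> cmat" where
  "Xneg2eps n j = Eunit (j+n) j"

definition simple_rv :: "nat \<Rightarrow> nat \<Rightarrow> cmat" where
  "simple_rv n j = (if j < n then Xdiff n j (j+1) else X2eps n j)"

definition Hcart :: "nat \<Rightarrow> (nat \<Rightarrow> complex) \<Rightarrow> cmat" where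
  "Hcart n h = (\<lambda>p q. if p = q \<and> p \<in> {1..n} then h p
                      else if p = q \<and> p \<in> {n+1..2*n} then - h (p - n) else 0)"

definition tens :: "cmat \<Rightarrow> cmat \<Rightarrow> ctens" where
  "tens X Y = (\<lambda>a b c d. X a b * Y c d)"

text \<open>(f \<otimes> Id) T and (Id \<otimes> f) T for a linear map f on gl(2n).\<close>
definition map_left :: "nat \<Rightarrow> (cmat \<Rightarrow> cmat) \<Rightarrow> ctens \<Rightarrow> ctens" where
  "map_left n f T = (\<lambda>a b c d. \<Sum>p\<in>{1..2*n}. \<Sum>q\<in>{1..2*n}. T p q c d * f (Eunit p q) a b)"
definition map_right :: "nat \<Rightarrow> (cmat \<Rightarrow> cmat) \<Rightarrow> ctens \<Rightarrow> ctens" where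
  "map_right n f T = (\<lambda>a b c d. \<Sum>p\<in>{1..2*n}. \<Sum>q\<in>{1..2*n}. T a b p q * f (Eunit p q) c d)"

definition lact :: "nat \<Rightarrow> cmat \<Rightarrow> ctens \<Rightarrow> ctens" where
  "lact n Y T = (\<lambda>a b c d. map_left n (ad n Y) T a b c d + map_right n (ad n Y) T a b c d)"

text \<open>omega, with Killing form normalisation constant c0.\<close>
definition omega :: "nat \<Rightarrow> nat \<Rightarrow> real \<Rightarrow> ctens" where
  "omega n i c0 = (\<lambda>a b c d.
      (1 / complex_of_real c0) * (\<Sum>j\<in>{1..i}. tens (Xneg2eps n j) (X2eps n j) a b c d)
    + (1 / (2 * complex_of_real c0)) *
        (\<Sum>j\<in>{1..i}. \<Sum>k\<in>{j<..i}. tens (Xnegsum n j k) (Xsum n j k) a b c d))"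

definition tau2 :: "nat \<Rightarrow> nat \<Rightarrow> real \<Rightarrow> cmat \<Rightarrow> ctens" where
  "tau2 n i c0 X = (\<lambda>a b c d. (1/2) * map_left n (\<lambda>Y. ad n X (ad n X Y)) (omega n i c0) a b c d)"

text \<open>Projection of l = z(l) \<oplus> l_gamma \<oplus> l_ngamma onto l_gamma = sl(i) (indices 1..i and their
hats). On X in l: keep the sl(i)-block, removing the z(l)-component (1/i)(sum_{j\<le>i} h_j)
sum_{j\<le>i} (E_jj - E_{hat j hat j}), and kill the sp(n-i)-block.\<close>
definition pr_lgamma :: "nat \<Rightarrow> nat \<Rightarrow> cmat \<Rightarrow> cmat" where
  "pr_lgamma n i X = (\<lambda>a b.
     let avg = (\<Sum>j\<in>{1..i}. X j j) / of_nat i in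
     if a \<in> {1..i} \<and> b \<in> {1..i} then X a b - (if a = b then avg else 0)
     else if a \<in> {n+1..n+i} \<and> b \<in> {n+1..n+i} then X a b + (if a = b then avg else 0)
     else 0)"

definition pr_tens :: "nat \<Rightarrow> nat \<Rightarrow> ctens \<Rightarrow> ctens" where
  "pr_tens n i T = map_left n (pr_lgamma n i) T"

end

theory Submission
  imports Defs
begin

text \<open>Let X = X_mu + X_eps_gamma = X_{eps_1+eps_{i+1}} + X_{eps_2-eps_{i+1}}. The operator
  ad(X)^2 acts only on the left factors of omega, so it suffices to compute it on the root
  vectors X_{-2eps_j} and X_{-(eps_j+eps_k)}, j < k <= i: those with j >= 3 commute twice to
  zero, and after projecting onto l_gamma = sl(i), which removes the eps_{i+1}-components,
  one obtains the closed form c0 * v = w with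
    w = 1/2 (X_{eps_2-eps_1} \<otimes> X_{2eps_1} - X_{eps_1-eps_2} \<otimes> X_{2eps_2})
      + 1/4 (H \<otimes> X_{eps_1+eps_2}
             + sum_{k=3..i} (X_{eps_2-eps_k} \<otimes> X_{eps_1+eps_k} - X_{eps_1-eps_k} \<otimes> X_{eps_2+eps_k})),
  where H = E_22 - E_11 - (E_{hat2 hat2} - E_{hat1 hat1}) is the coroot of eps_2 - eps_1.
  Each term of w has weight eps_1 + eps_2, and for every simple root alpha_j with j \<noteq> i
  the contributions of the terms of w to X_{alpha_j}.w cancel in pairs.\<close>

abbreviation idx :: "nat \<Rightarrow> nat set" where "idx n \<equiv> {1..2*n}"

definition supported :: "nat \<Rightarrow> cmat \<Rightarrow> bool" where
  "supported n M \<longleftrightarrow> (\<forall>a b. M a b \<noteq> 0 \<longrightarrow> a \<in> idx n \<and> b \<in> idx n)"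

text \<open>map_left and map_right only see the values of a map on the matrix units.\<close>
definition unit_linear :: "nat \<Rightarrow> (cmat \<Rightarrow> cmat) \<Rightarrow> bool" where
  "unit_linear n f \<longleftrightarrow>
     (\<forall>M. supported n M \<longrightarrow> f M = (\<lambda>a b. \<Sum>p\<in>idx n. \<Sum>q\<in>idx n. M p q * f (Eunit p q) a b))"

lemma if_one_zero_mult [simp]:
  "(if P then 1 else 0) * (x::complex) = (if P then x else 0)"
  "x * (if P then 1 else 0) = (if P then x else 0)"
  by simp_all

lemma mult_if_zero_right: "(x::complex) * (if P then y else 0) = (if P then x * y else 0)"
  by simp

lemma mult_if_zero_left: "(if P then y else 0) * (x::complex) = (if P then y * x else 0)"
  by simp

lemma sum_if_zero: "(\<Sum>q\<in>S. if P then f q else 0) = (if P then (\<Sum>q\<in>S. f q) else (0::complex))"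
  by simp

lemma if_conj_zero: "(if P \<and> Q then x else 0) = (if P then (if Q then x else 0) else (0::complex))"
  by simp

lemma sum_Eunit_left:
  "(\<Sum>c\<in>idx n. Eunit x y a c * f c) = (if a = x \<and> y \<in> idx n then f y else 0)"
  by (cases "a = x") (simp_all add: Eunit_def sum.delta)

lemma sum_Eunit_right:
  "(\<Sum>c\<in>idx n. f c * Eunit x y c b) = (if b = y \<and> x \<in> idx n then f x else 0)"
  by (cases "b = y") (simp_all add: Eunit_def sum.delta')

lemma sum_swap4:
  "(\<Sum>r\<in>A. \<Sum>s\<in>B. \<Sum>p\<in>C. \<Sum>q\<in>D. h r s p q) = (\<Sum>p\<in>C. \<Sum>q\<in>D. \<Sum>r\<in>A. \<Sum>s\<in>B. (h r s p q :: complex))"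
proof -
  have inner: "(\<Sum>s\<in>B. \<Sum>p\<in>C. \<Sum>q\<in>D. h r s p q) = (\<Sum>p\<in>C. \<Sum>q\<in>D. \<Sum>s\<in>B. h r s p q)" for r
    by (subst sum.swap) (rule sum.cong[OF refl], rule sum.swap)
  have "(\<Sum>r\<in>A. \<Sum>s\<in>B. \<Sum>p\<in>C. \<Sum>q\<in>D. h r s p q) = (\<Sum>r\<in>A. \<Sum>p\<in>C. \<Sum>q\<in>D. \<Sum>s\<in>B. h r s p q)"
    by (simp only: inner)
  also have "\<dots> = (\<Sum>p\<in>C. \<Sum>r\<in>A. \<Sum>q\<in>D. \<Sum>s\<in>B. h r s p q)"
    by (rule sum.swap)
  also have "\<dots> = (\<Sum>p\<in>C. \<Sum>q\<in>D. \<Sum>r\<in>A. \<Sum>s\<in>B. h r s p q)"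
    by (rule sum.cong[OF refl], rule sum.swap)
  finally show ?thesis .
qed

lemma supported_zero: "supported n M \<Longrightarrow> a \<notin> idx n \<or> b \<notin> idx n \<Longrightarrow> M a b = 0"
  unfolding supported_def by blast

lemma supported_Eunit: "p \<in> idx n \<Longrightarrow> q \<in> idx n \<Longrightarrow> supported n (Eunit p q)"
  unfolding supported_def Eunit_def by auto

lemma supported_Xdiff: "p \<in> {1..n} \<Longrightarrow> q \<in> {1..n} \<Longrightarrow> supported n (Xdiff n p q)"
  unfolding supported_def Xdiff_def msub_def Eunit_def by auto

lemma supported_Xsum: "p \<in> {1..n} \<Longrightarrow> q \<in> {1..n} \<Longrightarrow> supported n (Xsum n p q)"
  unfolding supported_def Xsum_def madd_def Eunit_def by auto

lemma supported_Xnegsum: "p \<in> {1..n} \<Longrightarrow> q \<in> {1..n} \<Longrightarrow> supported n (Xnegsum n p q)"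
  unfolding supported_def Xnegsum_def madd_def Eunit_def by auto

lemma supported_X2eps: "p \<in> {1..n} \<Longrightarrow> supported n (X2eps n p)"
  unfolding supported_def X2eps_def Eunit_def by auto

lemma supported_Xneg2eps: "p \<in> {1..n} \<Longrightarrow> supported n (Xneg2eps n p)"
  unfolding supported_def Xneg2eps_def Eunit_def by auto

lemma supported_ad:
  assumes sX: "supported n X" and sM: "supported n M"
  shows "supported n (ad n X M)"
proof -
  have "ad n X M a b = 0" if "a \<notin> idx n \<or> b \<notin> idx n" for a b
    using that supported_zero[OF sX] supported_zero[OF sM] by (auto simp add: ad_def msub_def mmul_def)
  then show ?thesis unfolding supported_def by blast
qed

lemma sum_Eunit_expand: "supported n M \<Longrightarrow> (\<Sum>p\<in>idx n. \<Sum>q\<in>idx n. M p q * Eunit p q a b) = M a b"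
  by (cases "a \<in> idx n \<and> b \<in> idx n")
    (auto simp: supported_zero Eunit_def mult_if_zero_right if_conj_zero sum_if_zero sum.delta)

lemma unit_linearD:
  "unit_linear n f \<Longrightarrow> supported n M \<Longrightarrow> f M a b = (\<Sum>p\<in>idx n. \<Sum>q\<in>idx n. M p q * f (Eunit p q) a b)"
  unfolding unit_linear_def by simp

lemma ad_Eunit_right: "p \<in> idx n \<Longrightarrow> q \<in> idx n \<Longrightarrow>
  ad n X (Eunit p q) = (\<lambda>a b. (if b = q then X a p else 0) - (if a = p then X q b else 0))"
  unfolding ad_def msub_def mmul_def
  by (intro ext, simp only: sum_Eunit_left sum_Eunit_right, simp)

lemma unit_linear_ad: "unit_linear n (ad n X)"
  unfolding unit_linear_def
proof (intro allI impI ext)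
  fix M a b assume sM: "supported n M"
  have left: "(\<Sum>p\<in>idx n. \<Sum>q\<in>idx n. M p q * (if b = q then X a p else 0)) = (\<Sum>c\<in>idx n. X a c * M c b)"
    by (cases "b \<in> idx n") (auto simp: supported_zero[OF sM] mult_if_zero_right sum.delta mult.commute)
  have right: "(\<Sum>p\<in>idx n. \<Sum>q\<in>idx n. M p q * (if a = p then X q b else 0)) = (\<Sum>c\<in>idx n. M a c * X c b)"
    by (cases "a \<in> idx n") (auto simp: supported_zero[OF sM] mult_if_zero_right sum_if_zero sum.delta)
  have "(\<Sum>p\<in>idx n. \<Sum>q\<in>idx n. M p q * ad n X (Eunit p q) a b) =
     (\<Sum>p\<in>idx n. \<Sum>q\<in>idx n. M p q * (if b = q then X a p else 0))
   - (\<Sum>p\<in>idx n. \<Sum>q\<in>idx n. M p q * (if a = p then X q b else 0))"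
    by (simp add: ad_Eunit_right right_diff_distrib sum_subtractf del: atLeastAtMost_iff)
  also have "\<dots> = ad n X M a b"
    unfolding left right by (simp add: ad_def msub_def mmul_def)
  finally show "ad n X M a b = (\<Sum>p\<in>idx n. \<Sum>q\<in>idx n. M p q * ad n X (Eunit p q) a b)"
    by simp
qed

lemma unit_linear_comp:
  assumes f: "unit_linear n f" and g: "unit_linear n g"
    and sg: "\<And>M. supported n M \<Longrightarrow> supported n (g M)"
  shows "unit_linear n (\<lambda>M. f (g M))"
  unfolding unit_linear_def
proof (intro allI impI ext)
  fix M a b assume sM: "supported n M"
  have "f (g M) a b = (\<Sum>r\<in>idx n. \<Sum>s\<in>idx n. g M r s * f (Eunit r s) a b)"
    by (rule unit_linearD[OF f sg[OF sM]])
  also have "\<dots> = (\<Sum>r\<in>idx n. \<Sum>s\<in>idx n.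
      (\<Sum>p\<in>idx n. \<Sum>q\<in>idx n. M p q * g (Eunit p q) r s) * f (Eunit r s) a b)"
    by (simp only: unit_linearD[OF g sM])
  also have "\<dots> = (\<Sum>p\<in>idx n. \<Sum>q\<in>idx n.
      M p q * (\<Sum>r\<in>idx n. \<Sum>s\<in>idx n. g (Eunit p q) r s * f (Eunit r s) a b))"
    unfolding sum_distrib_left sum_distrib_right mult.assoc by (rule sum_swap4)
  also have "\<dots> = (\<Sum>p\<in>idx n. \<Sum>q\<in>idx n. M p q * f (g (Eunit p q)) a b)"
    by (intro sum.cong refl) (simp only: unit_linearD[OF f sg[OF supported_Eunit]])
  finally show "f (g M) a b = (\<Sum>p\<in>idx n. \<Sum>q\<in>idx n. M p q * f (g (Eunit p q)) a b)" .
qed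

lemma sum_Eunit_trace:
  assumes "i \<le> n"
  shows "(\<Sum>p\<in>idx n. \<Sum>q\<in>idx n. M p q * (\<Sum>j\<in>{1..i}. Eunit p q j j)) = (\<Sum>j\<in>{1..i}. M j j)"
proof -
  have "(\<Sum>p\<in>idx n. \<Sum>q\<in>idx n. M p q * (\<Sum>j\<in>{1..i}. Eunit p q j j))
      = (\<Sum>j\<in>{1..i}. \<Sum>p\<in>idx n. \<Sum>q\<in>idx n. M p q * Eunit p q j j)"
    by (simp only: sum_distrib_left, subst sum.swap, rule sum.cong[OF refl], rule sum.swap)
  also have "\<dots> = (\<Sum>j\<in>{1..i}. M j j)"
    using assms
    by (intro sum.cong refl) (simp add: Eunit_def mult_if_zero_right if_conj_zero sum_if_zero sum.delta)
  finally show ?thesis .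
qed

lemma unit_linear_pr_lgamma:
  assumes "i \<le> n"
  shows "unit_linear n (pr_lgamma n i)"
  unfolding unit_linear_def
proof (intro allI impI ext)
  fix M a b assume sM: "supported n M"
  let ?A = "a \<in> {1..i} \<and> b \<in> {1..i}"
  let ?B = "a \<in> {n+1..n+i} \<and> b \<in> {n+1..n+i}"
  let ?avg = "\<lambda>N. (\<Sum>j\<in>{1..i}. N j j) / of_nat i"
  have pr: "pr_lgamma n i N a b = (if ?A then N a b - (if a = b then ?avg N else 0)
      else if ?B then N a b + (if a = b then ?avg N else 0) else 0)" for N
    unfolding pr_lgamma_def Let_def by simp
  have entry: "(\<Sum>p\<in>idx n. \<Sum>q\<in>idx n. M p q * Eunit p q x y) = M x y" for x y
    by (rule sum_Eunit_expand[OF sM])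
  have avg: "(\<Sum>p\<in>idx n. \<Sum>q\<in>idx n. M p q * ?avg (Eunit p q)) = ?avg M"
  proof -
    have "(\<Sum>p\<in>idx n. \<Sum>q\<in>idx n. M p q * ?avg (Eunit p q))
        = (\<Sum>p\<in>idx n. \<Sum>q\<in>idx n. M p q * (\<Sum>j\<in>{1..i}. Eunit p q j j)) / of_nat i"
      by (simp only: divide_inverse sum_distrib_right mult.assoc)
    then show ?thesis by (simp only: sum_Eunit_trace[OF assms])
  qed
  show "pr_lgamma n i M a b = (\<Sum>p\<in>idx n. \<Sum>q\<in>idx n. M p q * pr_lgamma n i (Eunit p q) a b)"
  proof (cases ?A)
    case True
    then show ?thesis unfolding pr
      by (cases "a = b", simp_all only: if_True if_False True simp_thms right_diff_distrib
          sum_subtractf entry avg mult_zero_right diff_zero sum.neutral_const)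
  next
    case notA: False
    show ?thesis
    proof (cases ?B)
      case True
      then show ?thesis using notA unfolding pr
        by (cases "a = b", simp_all only: if_True if_False True notA simp_thms distrib_left
            sum.distrib entry avg mult_zero_right add_0_right sum.neutral_const)
    next
      case False
      then show ?thesis unfolding pr by (simp only: notA False if_False mult_zero_right sum.neutral_const)
    qed
  qed
qed

lemma map_left_tens:
  assumes "unit_linear n f" "supported n A"
  shows "map_left n f (tens A B) = tens (f A) B"
  using unit_linearD[OF assms] unfolding map_left_def tens_def
  by (simp add: sum_distrib_left mult_ac)

lemma map_right_tens:
  assumes "unit_linear n f" "supported n B"
  shows "map_right n f (tens A B) = tens A (f B)"
  using unit_linearD[OF assms] unfolding map_right_def tens_def
  by (simp add: sum_distrib_left mult_ac)

lemma map_left_add: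
  "map_left n f (\<lambda>a b c d. S a b c d + T a b c d)
     = (\<lambda>a b c d. map_left n f S a b c d + map_left n f T a b c d)"
  by (simp add: map_left_def distrib_right sum.distrib)

lemma map_left_scale:
  "map_left n f (\<lambda>a b c d. k * S a b c d) = (\<lambda>a b c d. k * map_left n f S a b c d)"
  by (simp add: map_left_def sum_distrib_left mult.assoc)

lemma map_left_sum:
  "map_left n f (\<lambda>a b c d. \<Sum>j\<in>J. S j a b c d) = (\<lambda>a b c d. \<Sum>j\<in>J. map_left n f (S j) a b c d)"
  unfolding map_left_def sum_distrib_right
  by (intro ext) (subst sum.swap, rule sum.cong[OF refl], rule sum.swap)

lemma map_right_sum:
  "map_right n f (\<lambda>a b c d. \<Sum>j\<in>J. S j a b c d) = (\<lambda>a b c d. \<Sum>j\<in>J. map_right n f (S j) a b c d)"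
  unfolding map_right_def sum_distrib_right
  by (intro ext) (subst sum.swap, rule sum.cong[OF refl], rule sum.swap)

lemma map_left_comp:
  assumes f: "unit_linear n f"
    and sg: "\<And>p q. p \<in> idx n \<Longrightarrow> q \<in> idx n \<Longrightarrow> supported n (g (Eunit p q))"
  shows "map_left n f (map_left n g T) = map_left n (\<lambda>M. f (g M)) T"
proof (intro ext)
  fix a b c d
  have "map_left n f (map_left n g T) a b c d
      = (\<Sum>p\<in>idx n. \<Sum>q\<in>idx n. (\<Sum>r\<in>idx n. \<Sum>s\<in>idx n. T r s c d * g (Eunit r s) p q) * f (Eunit p q) a b)"
    by (simp add: map_left_def)
  also have "\<dots> = (\<Sum>r\<in>idx n. \<Sum>s\<in>idx n. T r s c d * (\<Sum>p\<in>idx n. \<Sum>q\<in>idx n. g (Eunit r s) p q * f (Eunit p q) a b))"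
    unfolding sum_distrib_left sum_distrib_right mult.assoc by (rule sum_swap4)
  also have "\<dots> = (\<Sum>r\<in>idx n. \<Sum>s\<in>idx n. T r s c d * f (g (Eunit r s)) a b)"
    by (intro sum.cong refl) (simp only: unit_linearD[OF f sg])
  finally show "map_left n f (map_left n g T) a b c d = map_left n (\<lambda>M. f (g M)) T a b c d"
    by (simp add: map_left_def)
qed

lemma lact_tens:
  "supported n A \<Longrightarrow> supported n B \<Longrightarrow>
   lact n Y (tens A B) = (\<lambda>a b c d. tens (ad n Y A) B a b c d + tens A (ad n Y B) a b c d)"
  unfolding lact_def by (simp add: map_left_tens[OF unit_linear_ad] map_right_tens[OF unit_linear_ad])

lemma lact_add:
  "lact n Y (\<lambda>a b c d. S a b c d + T a b c d) = (\<lambda>a b c d. lact n Y S a b c d + lact n Y T a b c d)"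
  unfolding lact_def map_left_def map_right_def by (simp add: distrib_right sum.distrib algebra_simps)

lemma lact_diff:
  "lact n Y (\<lambda>a b c d. S a b c d - T a b c d) = (\<lambda>a b c d. lact n Y S a b c d - lact n Y T a b c d)"
  unfolding lact_def map_left_def map_right_def by (simp add: left_diff_distrib sum_subtractf algebra_simps)

lemma lact_scale:
  "lact n Y (\<lambda>a b c d. k * S a b c d) = (\<lambda>a b c d. k * lact n Y S a b c d)"
  unfolding lact_def map_left_def map_right_def by (simp add: sum_distrib_left algebra_simps)

lemma lact_sum:
  "lact n Y (\<lambda>a b c d. \<Sum>j\<in>J. S j a b c d) = (\<lambda>a b c d. \<Sum>j\<in>J. lact n Y (S j) a b c d)"
  unfolding lact_def map_left_sum map_right_sum by (simp add: sum.distrib)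

section \<open>The square of ad(X) on the left factors of omega\<close>

definition ad_sq :: "nat \<Rightarrow> cmat \<Rightarrow> cmat \<Rightarrow> cmat" where
  "ad_sq n X Y = ad n X (ad n X Y)"

definition pr_ad_sq :: "nat \<Rightarrow> nat \<Rightarrow> cmat \<Rightarrow> cmat \<Rightarrow> cmat" where
  "pr_ad_sq n i X Y = pr_lgamma n i (ad_sq n X Y)"

lemma supported_ad_sq: "supported n X \<Longrightarrow> supported n M \<Longrightarrow> supported n (ad_sq n X M)"
  unfolding ad_sq_def by (intro supported_ad)

lemma unit_linear_ad_sq:
  assumes "supported n X"
  shows "unit_linear n (ad_sq n X)"
proof -
  have "ad_sq n X = (\<lambda>M. ad n X (ad n X M))"
    by (rule ext) (simp add: ad_sq_def)
  then show ?thesis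
    using unit_linear_comp[OF unit_linear_ad unit_linear_ad supported_ad[OF assms]] by simp
qed

lemma unit_linear_pr_ad_sq:
  assumes "supported n X" "i \<le> n"
  shows "unit_linear n (pr_ad_sq n i X)"
proof -
  have "pr_ad_sq n i X = (\<lambda>M. pr_lgamma n i (ad_sq n X M))"
    by (rule ext) (simp add: pr_ad_sq_def)
  then show ?thesis
    using unit_linear_comp[OF unit_linear_pr_lgamma[OF assms(2)] unit_linear_ad_sq[OF assms(1)]
        supported_ad_sq[OF assms(1)]]
    by simp
qed

lemma pr_tens_tau2:
  assumes X: "supported n X" and "i \<le> n"
  shows "pr_tens n i (tau2 n i c0 X) = (\<lambda>a b c d.
     1/2 * ((1 / complex_of_real c0) * (\<Sum>j\<in>{1..i}. tens (pr_ad_sq n i X (Xneg2eps n j)) (X2eps n j) a b c d)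
    + (1 / (2 * complex_of_real c0)) *
        (\<Sum>j\<in>{1..i}. \<Sum>k\<in>{j<..i}. tens (pr_ad_sq n i X (Xnegsum n j k)) (Xsum n j k) a b c d)))"
proof -
  have "ad_sq n X = (\<lambda>Y. ad n X (ad n X Y))"
    by (rule ext) (simp add: ad_sq_def)
  then have tau2: "tau2 n i c0 X = (\<lambda>a b c d. 1/2 * map_left n (ad_sq n X) (omega n i c0) a b c d)"
    unfolding tau2_def by simp
  have "pr_ad_sq n i X = (\<lambda>M. pr_lgamma n i (ad_sq n X M))"
    by (rule ext) (simp add: pr_ad_sq_def)
  then have comp: "map_left n (pr_lgamma n i) (map_left n (ad_sq n X) T) = map_left n (pr_ad_sq n i X) T" for T
    using map_left_comp[where g = "ad_sq n X", OF unit_linear_pr_lgamma[OF assms(2)]]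
      supported_ad_sq[OF X supported_Eunit]
    by simp
  have lin: "unit_linear n (pr_ad_sq n i X)"
    by (rule unit_linear_pr_ad_sq[OF assms])
  have sq: "map_left n (pr_ad_sq n i X) (tens (Xneg2eps n j) (X2eps n j))
      = tens (pr_ad_sq n i X (Xneg2eps n j)) (X2eps n j)" if "j \<in> {1..i}" for j
    using that assms by (intro map_left_tens lin supported_Xneg2eps) auto
  have sum: "map_left n (pr_ad_sq n i X) (tens (Xnegsum n j k) (Xsum n j k))
      = tens (pr_ad_sq n i X (Xnegsum n j k)) (Xsum n j k)" if "j \<in> {1..i}" "k \<in> {j<..i}" for j k
    using that assms by (intro map_left_tens lin supported_Xnegsum) auto
  show ?thesis
    unfolding pr_tens_def tau2 map_left_scale comp omega_def map_left_add map_left_sum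
    by (intro ext, simp only: sq sum cong: sum.cong)
qed

section \<open>Brackets with root vectors and with the Cartan subalgebra\<close>

definition Hcoroot21 :: "nat \<Rightarrow> cmat" where
  "Hcoroot21 n = msub (Xdiff n 2 2) (Xdiff n 1 1)"

lemma Hcoroot21_apply: "Hcoroot21 n a b = Xdiff n 2 2 a b - Xdiff n 1 1 a b"
  by (simp add: Hcoroot21_def msub_def)

lemma Xsum_diag: "Xsum n p p a b = 2 * X2eps n p a b"
  unfolding Xsum_def X2eps_def madd_def by simp

lemma Xsum_commute: "Xsum n q p a b = Xsum n p q a b"
  unfolding Xsum_def madd_def by simp

lemma supported_Hcoroot21: "2 \<le> n \<Longrightarrow> supported n (Hcoroot21 n)"
  unfolding supported_def Hcoroot21_def Xdiff_def msub_def Eunit_def by auto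

lemma ad_Xdiff: "p \<in> {1..n} \<Longrightarrow> q \<in> {1..n} \<Longrightarrow> ad n (Xdiff n p q) M a b =
    (if a = p then M q b else 0) - (if a = q + n then M (p+n) b else 0)
  - (if b = q then M a p else 0) + (if b = p + n then M a (q+n) else 0)"
  unfolding ad_def msub_def mmul_def Xdiff_def
  by (simp only: left_diff_distrib right_diff_distrib sum_subtractf sum_Eunit_left sum_Eunit_right)
    (auto simp: algebra_simps)

lemma ad_X2eps: "p \<in> {1..n} \<Longrightarrow>
  ad n (X2eps n p) M a b = (if a = p then M (p+n) b else 0) - (if b = p+n then M a p else 0)"
  unfolding ad_def msub_def mmul_def X2eps_def
  by (simp only: sum_Eunit_left sum_Eunit_right) (auto simp: algebra_simps)

lemma ad_Xdiff_Xdiff: "p \<in> {1..n} \<Longrightarrow> q \<in> {1..n} \<Longrightarrow> r \<in> {1..n} \<Longrightarrow> s \<in> {1..n} \<Longrightarrow>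
  ad n (Xdiff n p q) (Xdiff n r s) a b
    = (if q = r then Xdiff n p s a b else 0) - (if s = p then Xdiff n r q a b else 0)"
  by (simp only: ad_Xdiff) (auto simp: Xdiff_def msub_def Eunit_def)

lemma ad_Xdiff_Xsum: "p \<in> {1..n} \<Longrightarrow> q \<in> {1..n} \<Longrightarrow> r \<in> {1..n} \<Longrightarrow> s \<in> {1..n} \<Longrightarrow>
  ad n (Xdiff n p q) (Xsum n r s) a b
    = (if q = r then Xsum n p s a b else 0) + (if q = s then Xsum n r p a b else 0)"
  by (simp only: ad_Xdiff) (auto simp: Xsum_def madd_def Eunit_def)

lemma ad_Xdiff_X2eps: "p \<in> {1..n} \<Longrightarrow> q \<in> {1..n} \<Longrightarrow> r \<in> {1..n} \<Longrightarrow>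
  ad n (Xdiff n p q) (X2eps n r) a b = (if q = r then Xsum n p q a b else 0)"
  by (simp only: ad_Xdiff) (auto simp: Xsum_def X2eps_def madd_def Eunit_def)

lemma ad_Xdiff_Hcoroot21: "p \<in> {1..n} \<Longrightarrow> q \<in> {1..n} \<Longrightarrow>
  ad n (Xdiff n p q) (Hcoroot21 n) a b =
    ((if p = 1 then 1 else 0) - (if q = 1 then 1 else 0) - (if p = 2 then 1 else 0) + (if q = 2 then 1 else 0))
    * Xdiff n p q a b"
  by (simp only: ad_Xdiff) (auto simp: Hcoroot21_def Xdiff_def msub_def Eunit_def)

lemma ad_Hcart:
  assumes "supported n M"
  shows "ad n (Hcart n h) M a b = (Hcart n h a a - Hcart n h b b) * M a b"
proof -
  have diag: "Hcart n h x y = (if y = x then Hcart n h x x else 0)" for x y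
    unfolding Hcart_def by auto
  have left: "(\<Sum>c\<in>idx n. Hcart n h a c * M c b) = Hcart n h a a * M a b"
    by (cases "a \<in> idx n"; subst diag; auto simp: supported_zero[OF assms] mult_if_zero_left)
  have right: "(\<Sum>c\<in>idx n. M a c * Hcart n h c b) = M a b * Hcart n h b b"
    by (cases "b \<in> idx n"; subst diag;
        auto simp: supported_zero[OF assms] mult_if_zero_right sum.delta' simp del: atLeastAtMost_iff)
  show ?thesis
    unfolding ad_def msub_def mmul_def left right by (simp add: algebra_simps)
qed

lemma ad_Hcart_Xdiff: "p \<in> {1..n} \<Longrightarrow> q \<in> {1..n} \<Longrightarrow>
  ad n (Hcart n h) (Xdiff n p q) a b = (h p - h q) * Xdiff n p q a b"
  by (simp only: ad_Hcart[OF supported_Xdiff]) (auto simp: Hcart_def Xdiff_def msub_def Eunit_def)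

lemma ad_Hcart_Xsum: "p \<in> {1..n} \<Longrightarrow> q \<in> {1..n} \<Longrightarrow>
  ad n (Hcart n h) (Xsum n p q) a b = (h p + h q) * Xsum n p q a b"
  by (simp only: ad_Hcart[OF supported_Xsum]) (auto simp: Hcart_def Xsum_def madd_def Eunit_def)

lemma ad_Hcart_X2eps: "p \<in> {1..n} \<Longrightarrow> ad n (Hcart n h) (X2eps n p) a b = 2 * h p * X2eps n p a b"
  by (simp only: ad_Hcart[OF supported_X2eps]) (auto simp: Hcart_def X2eps_def Eunit_def)

lemma ad_Hcart_Hcoroot21: "2 \<le> n \<Longrightarrow> ad n (Hcart n h) (Hcoroot21 n) a b = 0"
  by (simp only: ad_Hcart[OF supported_Hcoroot21]) (auto simp: Hcart_def Hcoroot21_def Xdiff_def msub_def Eunit_def)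

section \<open>The closed form of v\<close>

definition Xmu_eps :: "nat \<Rightarrow> nat \<Rightarrow> cmat" where
  "Xmu_eps n i = madd (Xsum n 1 (i+1)) (Xdiff n 2 (i+1))"

lemma supported_Xmu_eps: "1 \<le> i \<Longrightarrow> i + 1 \<le> n \<Longrightarrow> supported n (Xmu_eps n i)"
  unfolding supported_def Xmu_eps_def madd_def Xsum_def Xdiff_def msub_def Eunit_def by auto

lemma ad_Xmu_eps:
  assumes "1 \<le> i" "i + 1 \<le> n"
  shows "ad n (Xmu_eps n i) M a b =
      (if a = 1 then M (i+1+n) b else 0) + (if a = i+1 then M (1+n) b else 0)
    + (if a = 2 then M (i+1) b else 0) - (if a = i+1+n then M (2+n) b else 0)
    - ((if b = i+1+n then M a 1 else 0) + (if b = 1+n then M a (i+1) else 0)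
    + (if b = i+1 then M a 2 else 0) - (if b = 2+n then M a (i+1+n) else 0))"
  using assms
  unfolding ad_def msub_def mmul_def Xmu_eps_def madd_def Xsum_def Xdiff_def
  by (simp only: distrib_right left_diff_distrib distrib_left right_diff_distrib sum.distrib
      sum_subtractf sum_Eunit_left sum_Eunit_right, simp add: ac_simps)

definition hw_vector :: "nat \<Rightarrow> nat \<Rightarrow> ctens" where
  "hw_vector n i = (\<lambda>a b c d.
       1/2 * (tens (Xdiff n 2 1) (X2eps n 1) a b c d - tens (Xdiff n 1 2) (X2eps n 2) a b c d)
     + 1/4 * (tens (Hcoroot21 n) (Xsum n 1 2) a b c d
       + (\<Sum>k\<in>{3..i}. tens (Xdiff n 2 k) (Xsum n 1 k) a b c d - tens (Xdiff n 1 k) (Xsum n 2 k) a b c d)))"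

lemma sum_atLeastAtMost_split_12:
  "2 \<le> (i::nat) \<Longrightarrow> (\<Sum>j\<in>{1..i}. f j) = f 1 + (f 2 + (\<Sum>j\<in>{3..i}. (f j::'a::comm_monoid_add)))"
proof -
  assume "2 \<le> i"
  then have "{1..i} = insert 1 (insert 2 {3..i})" by auto
  then show ?thesis by simp
qed

lemma pr_lgamma_traceless:
  assumes "(\<Sum>t\<in>{1..i}. M t t) = 0"
  shows "pr_lgamma n i M a b =
    (if (a \<in> {1..i} \<and> b \<in> {1..i}) \<or> (a \<in> {n+1..n+i} \<and> b \<in> {n+1..n+i}) then M a b else 0)"
proof -
  have "(\<Sum>j\<in>{1..i}. M j j) / of_nat i = 0"
    using assms by simp
  then show ?thesis
    unfolding pr_lgamma_def Let_def
    by (simp only: diff_zero add_0_right if_cancel split: if_split) auto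
qed

context
  fixes n i :: nat
  assumes i2: "2 \<le> i" and i1: "i + 1 \<le> n"
begin

lemma ad_sq_Xneg2eps_1:
  "ad_sq n (Xmu_eps n i) (Xneg2eps n 1) a b = Xdiff n 2 1 a b - 2 * X2eps n (i+1) a b"
  using i2 i1 unfolding ad_sq_def
  by (simp only: ad_Xmu_eps) (simp add: Xneg2eps_def X2eps_def Xdiff_def Eunit_def msub_def)

lemma ad_sq_Xneg2eps_2:
  "ad_sq n (Xmu_eps n i) (Xneg2eps n 2) a b = - Xdiff n 1 2 a b + 2 * Xneg2eps n (i+1) a b"
  using i2 i1 unfolding ad_sq_def
  by (simp only: ad_Xmu_eps) (simp add: Xneg2eps_def Xdiff_def Eunit_def msub_def)

lemma ad_sq_Xneg2eps_ge3:
  "3 \<le> j \<Longrightarrow> j \<le> i \<Longrightarrow> ad_sq n (Xmu_eps n i) (Xneg2eps n j) a b = 0"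
  using i2 i1 unfolding ad_sq_def
  by (simp only: ad_Xmu_eps) (simp add: Xneg2eps_def Eunit_def)

lemma ad_sq_Xnegsum_12:
  "ad_sq n (Xmu_eps n i) (Xnegsum n 1 2) a b = Hcoroot21 n a b - 2 * Xdiff n (i+1) (i+1) a b"
  using i2 i1 unfolding ad_sq_def
  by (simp only: ad_Xmu_eps) (simp add: Xnegsum_def Hcoroot21_def Xdiff_def Eunit_def madd_def msub_def)

lemma ad_sq_Xnegsum_1k:
  "3 \<le> k \<Longrightarrow> k \<le> i \<Longrightarrow> ad_sq n (Xmu_eps n i) (Xnegsum n 1 k) a b = Xdiff n 2 k a b"
  using i2 i1 unfolding ad_sq_def
  by (simp only: ad_Xmu_eps) (simp add: Xnegsum_def Xdiff_def Eunit_def madd_def msub_def)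

lemma ad_sq_Xnegsum_2k:
  "3 \<le> k \<Longrightarrow> k \<le> i \<Longrightarrow> ad_sq n (Xmu_eps n i) (Xnegsum n 2 k) a b = - Xdiff n 1 k a b"
  using i2 i1 unfolding ad_sq_def
  by (simp only: ad_Xmu_eps) (simp add: Xnegsum_def Xdiff_def Eunit_def madd_def msub_def)

lemma ad_sq_Xnegsum_ge3:
  "3 \<le> j \<Longrightarrow> j < k \<Longrightarrow> k \<le> i \<Longrightarrow> ad_sq n (Xmu_eps n i) (Xnegsum n j k) a b = 0"
  using i2 i1 unfolding ad_sq_def
  by (simp only: ad_Xmu_eps) (simp add: Xnegsum_def Eunit_def madd_def)

lemma pr_ad_sq_Xneg2eps_1: "pr_ad_sq n i (Xmu_eps n i) (Xneg2eps n 1) a b = Xdiff n 2 1 a b"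
proof -
  have "(\<Sum>t\<in>{1..i}. ad_sq n (Xmu_eps n i) (Xneg2eps n 1) t t) = 0"
    using i2 i1 by (intro sum.neutral ballI)
      (simp only: ad_sq_Xneg2eps_1, simp add: Xdiff_def X2eps_def Eunit_def msub_def)
  then show ?thesis
    using i2 i1 unfolding pr_ad_sq_def
    by (simp only: pr_lgamma_traceless ad_sq_Xneg2eps_1) (simp add: Xdiff_def X2eps_def Eunit_def msub_def)
qed

lemma pr_ad_sq_Xneg2eps_2: "pr_ad_sq n i (Xmu_eps n i) (Xneg2eps n 2) a b = - Xdiff n 1 2 a b"
proof -
  have "(\<Sum>t\<in>{1..i}. ad_sq n (Xmu_eps n i) (Xneg2eps n 2) t t) = 0"
    using i2 i1 by (intro sum.neutral ballI)
      (simp only: ad_sq_Xneg2eps_2, simp add: Xdiff_def Xneg2eps_def Eunit_def msub_def)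
  then show ?thesis
    using i2 i1 unfolding pr_ad_sq_def
    by (simp only: pr_lgamma_traceless ad_sq_Xneg2eps_2) (simp add: Xdiff_def Xneg2eps_def Eunit_def msub_def)
qed

lemma pr_ad_sq_Xneg2eps_ge3:
  assumes "3 \<le> j" "j \<le> i"
  shows "pr_ad_sq n i (Xmu_eps n i) (Xneg2eps n j) a b = 0"
proof -
  have "(\<Sum>t\<in>{1..i}. ad_sq n (Xmu_eps n i) (Xneg2eps n j) t t) = 0"
    using assms by (simp add: ad_sq_Xneg2eps_ge3)
  then show ?thesis
    using assms unfolding pr_ad_sq_def by (simp add: pr_lgamma_traceless ad_sq_Xneg2eps_ge3)
qed

lemma pr_ad_sq_Xnegsum_12: "pr_ad_sq n i (Xmu_eps n i) (Xnegsum n 1 2) a b = Hcoroot21 n a b"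
proof -
  have "(\<Sum>t\<in>{1..i}. ad_sq n (Xmu_eps n i) (Xnegsum n 1 2) t t)
      = (\<Sum>t\<in>{1..i}. (if t = 2 then 1 else 0) - (if t = 1 then 1 else 0))"
    using i2 i1 by (intro sum.cong refl)
      (simp only: ad_sq_Xnegsum_12, simp add: Hcoroot21_def Xdiff_def Eunit_def msub_def)
  also have "\<dots> = 0"
    using i2 by (simp add: sum_subtractf)
  finally show ?thesis
    using i2 i1 unfolding pr_ad_sq_def
    by (simp only: pr_lgamma_traceless ad_sq_Xnegsum_12) (auto simp add: Hcoroot21_def Xdiff_def Eunit_def msub_def)
qed

lemma pr_ad_sq_Xnegsum_1k:
  assumes "3 \<le> k" "k \<le> i"
  shows "pr_ad_sq n i (Xmu_eps n i) (Xnegsum n 1 k) a b = Xdiff n 2 k a b"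
proof -
  have "(\<Sum>t\<in>{1..i}. ad_sq n (Xmu_eps n i) (Xnegsum n 1 k) t t) = 0"
    using assms by (intro sum.neutral ballI)
      (simp only: ad_sq_Xnegsum_1k, simp add: Xdiff_def Eunit_def msub_def)
  then show ?thesis
    using assms i1 unfolding pr_ad_sq_def
    by (simp only: pr_lgamma_traceless ad_sq_Xnegsum_1k) (simp add: Xdiff_def Eunit_def msub_def)
qed

lemma pr_ad_sq_Xnegsum_2k:
  assumes "3 \<le> k" "k \<le> i"
  shows "pr_ad_sq n i (Xmu_eps n i) (Xnegsum n 2 k) a b = - Xdiff n 1 k a b"
proof -
  have "(\<Sum>t\<in>{1..i}. ad_sq n (Xmu_eps n i) (Xnegsum n 2 k) t t) = 0"
    using assms by (intro sum.neutral ballI)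
      (simp only: ad_sq_Xnegsum_2k, simp add: Xdiff_def Eunit_def msub_def)
  then show ?thesis
    using assms i1 unfolding pr_ad_sq_def
    by (simp only: pr_lgamma_traceless ad_sq_Xnegsum_2k) (simp add: Xdiff_def Eunit_def msub_def)
qed

lemma pr_ad_sq_Xnegsum_ge3:
  assumes "3 \<le> j" "j < k" "k \<le> i"
  shows "pr_ad_sq n i (Xmu_eps n i) (Xnegsum n j k) a b = 0"
proof -
  have "(\<Sum>t\<in>{1..i}. ad_sq n (Xmu_eps n i) (Xnegsum n j k) t t) = 0"
    using assms by (simp add: ad_sq_Xnegsum_ge3)
  then show ?thesis
    using assms unfolding pr_ad_sq_def by (simp add: pr_lgamma_traceless ad_sq_Xnegsum_ge3)
qed

lemma pr_tens_tau2_Xmu_eps: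
  "pr_tens n i (tau2 n i c0 (Xmu_eps n i)) = (\<lambda>a b c d. (1 / complex_of_real c0) * hw_vector n i a b c d)"
proof (intro ext)
  fix a b c d
  have neg2eps: "(\<Sum>j\<in>{1..i}. tens (pr_ad_sq n i (Xmu_eps n i) (Xneg2eps n j)) (X2eps n j) a b c d)
     = tens (Xdiff n 2 1) (X2eps n 1) a b c d - tens (Xdiff n 1 2) (X2eps n 2) a b c d"
  proof -
    have ge3: "(\<Sum>j\<in>{3..i}. tens (pr_ad_sq n i (Xmu_eps n i) (Xneg2eps n j)) (X2eps n j) a b c d) = 0"
      by (intro sum.neutral ballI) (simp add: tens_def pr_ad_sq_Xneg2eps_ge3)
    show ?thesis
      unfolding sum_atLeastAtMost_split_12[OF i2] ge3
      by (simp only: tens_def pr_ad_sq_Xneg2eps_1 pr_ad_sq_Xneg2eps_2) simp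
  qed
  have negsum: "(\<Sum>j\<in>{1..i}. \<Sum>k\<in>{j<..i}. tens (pr_ad_sq n i (Xmu_eps n i) (Xnegsum n j k)) (Xsum n j k) a b c d)
     = tens (Hcoroot21 n) (Xsum n 1 2) a b c d
       + (\<Sum>k\<in>{3..i}. tens (Xdiff n 2 k) (Xsum n 1 k) a b c d - tens (Xdiff n 1 k) (Xsum n 2 k) a b c d)"
  proof -
    have ge3: "(\<Sum>j\<in>{3..i}. \<Sum>k\<in>{j<..i}. tens (pr_ad_sq n i (Xmu_eps n i) (Xnegsum n j k)) (Xsum n j k) a b c d) = 0"
      by (intro sum.neutral ballI) (simp add: tens_def pr_ad_sq_Xnegsum_ge3)
    have one_k: "(\<Sum>k\<in>{3..i}. tens (pr_ad_sq n i (Xmu_eps n i) (Xnegsum n 1 k)) (Xsum n 1 k) a b c d)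
        = (\<Sum>k\<in>{3..i}. tens (Xdiff n 2 k) (Xsum n 1 k) a b c d)"
      using pr_ad_sq_Xnegsum_1k by (intro sum.cong refl) (simp add: tens_def)
    have two_k: "(\<Sum>k\<in>{3..i}. tens (pr_ad_sq n i (Xmu_eps n i) (Xnegsum n 2 k)) (Xsum n 2 k) a b c d)
        = - (\<Sum>k\<in>{3..i}. tens (Xdiff n 1 k) (Xsum n 2 k) a b c d)"
      unfolding sum_negf[symmetric] using pr_ad_sq_Xnegsum_2k by (intro sum.cong refl) (simp add: tens_def)
    have twelve: "tens (pr_ad_sq n i (Xmu_eps n i) (Xnegsum n 1 2)) (Xsum n 1 2) a b c d
        = tens (Hcoroot21 n) (Xsum n 1 2) a b c d"
      by (simp only: tens_def pr_ad_sq_Xnegsum_12)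
    have gt1: "{1<..i} = insert 2 {3..i}" and gt2: "{2<..i} = {3..i}"
      using i2 by auto
    have insert2: "(\<Sum>k\<in>insert 2 {3..i}. f k) = f 2 + (\<Sum>k\<in>{3..i}. (f k::complex))" for f
      by simp
    show ?thesis
      unfolding sum_atLeastAtMost_split_12[OF i2] ge3 gt1 gt2 insert2 one_k two_k twelve
      by (simp add: sum_subtractf)
  qed
  have rescale: "1/2 * ((1 / z) * A + (1 / (2 * z)) * B) = (1 / z) * (1/2 * A + 1/4 * B)" for z A B :: complex
    by (cases "z = 0") (simp_all add: field_simps)
  have sX: "supported n (Xmu_eps n i)" and iN: "i \<le> n"
    using i2 i1 by (simp_all add: supported_Xmu_eps)
  show "pr_tens n i (tau2 n i c0 (Xmu_eps n i)) a b c d = (1 / complex_of_real c0) * hw_vector n i a b c d"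
    unfolding pr_tens_tau2[OF sX iN] neg2eps negsum hw_vector_def
    by (rule rescale)
qed

section \<open>The highest weight property\<close>

lemma one_two_in_range: "1 \<in> {1..n}" "2 \<in> {1..n}"
  using i2 i1 by auto

lemma tail_index_facts:
  assumes "k \<in> {3..i}"
  shows "k \<in> {1..n}" "(k = 1) = False" "(k = 2) = False" "(1 = k) = False" "(2 = k) = False"
  using assms i1 by auto

lemma lact_hw_vector:
  "lact n Y (hw_vector n i) = (\<lambda>a b c d.
     1/2 * ((ad n Y (Xdiff n 2 1) a b * X2eps n 1 c d + Xdiff n 2 1 a b * ad n Y (X2eps n 1) c d)
          - (ad n Y (Xdiff n 1 2) a b * X2eps n 2 c d + Xdiff n 1 2 a b * ad n Y (X2eps n 2) c d))
   + 1/4 * ((ad n Y (Hcoroot21 n) a b * Xsum n 1 2 c d + Hcoroot21 n a b * ad n Y (Xsum n 1 2) c d)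
     + (\<Sum>k\<in>{3..i}. (ad n Y (Xdiff n 2 k) a b * Xsum n 1 k c d + Xdiff n 2 k a b * ad n Y (Xsum n 1 k) c d)
                    - (ad n Y (Xdiff n 1 k) a b * Xsum n 2 k c d + Xdiff n 1 k a b * ad n Y (Xsum n 2 k) c d))))"
proof -
  have "2 \<le> n"
    using i2 i1 by simp
  then show ?thesis
    unfolding hw_vector_def lact_add lact_scale lact_diff lact_sum
    by (simp only: lact_tens supported_Xdiff supported_Xsum supported_X2eps supported_Hcoroot21
        one_two_in_range tail_index_facts cong: sum.cong) (simp only: tens_def)
qed

lemma lact_Xdiff_12_hw_vector: "lact n (Xdiff n 1 2) (hw_vector n i) = (\<lambda>_ _ _ _. 0)"
proof (intro ext)
  fix a b c d
  have "lact n (Xdiff n 1 2) (hw_vector n i) a b c d =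
     1/2 * ((Xdiff n 1 1 a b - Xdiff n 2 2 a b) * X2eps n 1 c d - Xdiff n 1 2 a b * Xsum n 1 2 c d)
   + 1/4 * ((2 * Xdiff n 1 2 a b) * Xsum n 1 2 c d + Hcoroot21 n a b * (2 * X2eps n 1 c d)
     + (\<Sum>k\<in>{3..i}. Xdiff n 1 k a b * Xsum n 1 k c d - Xdiff n 1 k a b * Xsum n 1 k c d))"
    unfolding lact_hw_vector
    by (simp only: ad_Xdiff_Xdiff ad_Xdiff_Xsum ad_Xdiff_X2eps ad_Xdiff_Hcoroot21 one_two_in_range
        tail_index_facts if_False cong: sum.cong)
      (simp add: Xsum_diag Xsum_commute cong: sum.cong)
  also have "\<dots> = 0"
    by (simp add: Hcoroot21_apply algebra_simps)
  finally show "lact n (Xdiff n 1 2) (hw_vector n i) a b c d = 0" .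
qed

lemma lact_Xdiff_23_hw_vector:
  assumes "3 \<le> i"
  shows "lact n (Xdiff n 2 3) (hw_vector n i) = (\<lambda>_ _ _ _. 0)"
proof (intro ext)
  fix a b c d
  have "3 \<in> {1..n}" "3 \<in> {3..i}"
    using assms i1 by auto
  then show "lact n (Xdiff n 2 3) (hw_vector n i) a b c d = 0"
    unfolding lact_hw_vector
    by (simp only: ad_Xdiff_Xdiff ad_Xdiff_Xsum ad_Xdiff_X2eps ad_Xdiff_Hcoroot21 one_two_in_range
        tail_index_facts if_False cong: sum.cong)
      (simp add: Xsum_diag Xsum_commute sum.distrib sum_subtractf mult_if_zero_right mult_if_zero_left
        sum.delta sum.delta' algebra_simps)
qed

lemma lact_Xdiff_inner_hw_vector:
  assumes "3 \<le> j" "j + 1 \<le> i"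
  shows "lact n (Xdiff n j (j+1)) (hw_vector n i) = (\<lambda>_ _ _ _. 0)"
proof (intro ext)
  fix a b c d
  have range: "j \<in> {1..n}" "j + 1 \<in> {1..n}" "j \<in> {3..i}" "j + 1 \<in> {3..i}"
    using assms i1 by auto
  have ne: "(j = 1) = False" "(j = 2) = False" "(1 = j) = False" "(2 = j) = False"
    "(j + 1 = 1) = False" "(j + 1 = 2) = False" "(1 = j + 1) = False" "(2 = j + 1) = False"
    using assms by auto
  show "lact n (Xdiff n j (j+1)) (hw_vector n i) a b c d = 0"
    unfolding lact_hw_vector
    by (simp only: ad_Xdiff_Xdiff ad_Xdiff_Xsum ad_Xdiff_X2eps ad_Xdiff_Hcoroot21 one_two_in_range
        tail_index_facts range ne if_False cong: sum.cong)
      (use range in \<open>auto simp: Xsum_diag Xsum_commute sum.distrib sum_subtractf mult_if_zero_right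
        mult_if_zero_left sum.delta sum.delta' algebra_simps\<close>)
qed

lemma lact_Xdiff_outer_hw_vector:
  assumes "i + 1 \<le> j" "j + 1 \<le> n"
  shows "lact n (Xdiff n j (j+1)) (hw_vector n i) = (\<lambda>_ _ _ _. 0)"
proof (intro ext)
  fix a b c d
  have range: "j \<in> {1..n}" "j + 1 \<in> {1..n}"
    using assms by auto
  have ne: "(j = 1) = False" "(j = 2) = False" "(1 = j) = False" "(2 = j) = False"
    "(j + 1 = 1) = False" "(j + 1 = 2) = False" "(1 = j + 1) = False" "(2 = j + 1) = False"
    using assms i2 by auto
  have tail_ne: "(k = j) = False" "(j = k) = False" "(k = j + 1) = False" "(j + 1 = k) = False"
    if "k \<in> {3..i}" for k
    using that assms by auto
  show "lact n (Xdiff n j (j+1)) (hw_vector n i) a b c d = 0"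
    unfolding lact_hw_vector
    by (simp only: ad_Xdiff_Xdiff ad_Xdiff_Xsum ad_Xdiff_X2eps ad_Xdiff_Hcoroot21 one_two_in_range
        tail_index_facts tail_ne range ne if_False cong: sum.cong) (simp add: algebra_simps)
qed

lemma lact_X2eps_hw_vector: "lact n (X2eps n n) (hw_vector n i) = (\<lambda>_ _ _ _. 0)"
proof (intro ext)
  fix a b c d
  have nn: "n \<in> {1..n}"
    using i1 by simp
  have Xdiff: "ad n (X2eps n n) (Xdiff n p q) a b = 0" if "p \<in> {1..n}" "q \<in> {1..n}" "q \<noteq> n" for p q a b
    using that by (simp only: ad_X2eps[OF nn]) (auto simp: Xdiff_def msub_def Eunit_def)
  have Xsum: "ad n (X2eps n n) (Xsum n p q) a b = 0" if "p \<in> {1..n}" "q \<in> {1..n}" for p q a b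
    using that by (simp only: ad_X2eps[OF nn]) (auto simp: Xsum_def madd_def Eunit_def)
  have X2eps: "ad n (X2eps n n) (X2eps n p) a b = 0" if "p \<in> {1..n}" for p a b
    using that by (simp only: ad_X2eps[OF nn]) (auto simp: X2eps_def Eunit_def)
  have H: "ad n (X2eps n n) (Hcoroot21 n) a b = 0" for a b
    using i2 i1 by (simp only: ad_X2eps[OF nn]) (auto simp: Hcoroot21_def Xdiff_def msub_def Eunit_def)
  have ne: "(1::nat) \<noteq> n" "(2::nat) \<noteq> n"
    using i2 i1 by auto
  have tail_ne: "k \<noteq> n" if "k \<in> {3..i}" for k
    using that i1 by auto
  show "lact n (X2eps n n) (hw_vector n i) a b c d = 0"
    unfolding lact_hw_vector
    by (simp only: Xdiff Xsum X2eps H one_two_in_range tail_index_facts ne tail_ne not_False_eq_True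
        cong: sum.cong) simp
qed

lemma lact_simple_rv_hw_vector:
  assumes j: "j \<in> {1..n} - {i}"
  shows "lact n (simple_rv n j) (hw_vector n i) = (\<lambda>_ _ _ _. 0)"
proof (cases "j < n")
  case True
  then have "simple_rv n j = Xdiff n j (j+1)"
    by (simp add: simple_rv_def)
  moreover consider "j = 1" | "j = 2" | "3 \<le> j" "j + 1 \<le> i" | "i + 1 \<le> j"
    using j by fastforce
  then have "lact n (Xdiff n j (j+1)) (hw_vector n i) = (\<lambda>_ _ _ _. 0)"
  proof cases
    case 1
    then show ?thesis using lact_Xdiff_12_hw_vector by (simp add: numeral_2_eq_2)
  next
    case 2
    moreover have "3 \<le> i"
      using 2 j i2 by auto
    ultimately show ?thesis using lact_Xdiff_23_hw_vector by simp
  next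
    case 3
    then show ?thesis by (rule lact_Xdiff_inner_hw_vector)
  next
    case 4
    then show ?thesis using True by (intro lact_Xdiff_outer_hw_vector) simp_all
  qed
  ultimately show ?thesis by simp
next
  case False
  then have "simple_rv n j = X2eps n n"
    using j by (simp add: simple_rv_def)
  then show ?thesis using lact_X2eps_hw_vector by simp
qed

lemma lact_Hcart_hw_vector:
  "lact n (Hcart n h) (hw_vector n i) = (\<lambda>a b c d. (h 1 + h 2) * hw_vector n i a b c d)"
proof (intro ext)
  fix a b c d
  have n2: "2 \<le> n"
    using i2 i1 by simp
  have "lact n (Hcart n h) (hw_vector n i) a b c d =
     1/2 * (((h 2 - h 1) * Xdiff n 2 1 a b * X2eps n 1 c d + Xdiff n 2 1 a b * (2 * h 1 * X2eps n 1 c d))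
          - ((h 1 - h 2) * Xdiff n 1 2 a b * X2eps n 2 c d + Xdiff n 1 2 a b * (2 * h 2 * X2eps n 2 c d)))
   + 1/4 * ((0 * Xsum n 1 2 c d + Hcoroot21 n a b * ((h 1 + h 2) * Xsum n 1 2 c d))
     + (\<Sum>k\<in>{3..i}.
          ((h 2 - h k) * Xdiff n 2 k a b * Xsum n 1 k c d + Xdiff n 2 k a b * ((h 1 + h k) * Xsum n 1 k c d))
        - ((h 1 - h k) * Xdiff n 1 k a b * Xsum n 2 k c d + Xdiff n 1 k a b * ((h 2 + h k) * Xsum n 2 k c d))))"
    unfolding lact_hw_vector
    by (simp only: ad_Hcart_Xdiff ad_Hcart_Xsum ad_Hcart_X2eps ad_Hcart_Hcoroot21[OF n2]
        one_two_in_range tail_index_facts cong: sum.cong)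
  also have "\<dots> = (h 1 + h 2) * hw_vector n i a b c d"
  proof -
    have "(\<Sum>k\<in>{3..i}.
          ((h 2 - h k) * Xdiff n 2 k a b * Xsum n 1 k c d + Xdiff n 2 k a b * ((h 1 + h k) * Xsum n 1 k c d))
        - ((h 1 - h k) * Xdiff n 1 k a b * Xsum n 2 k c d + Xdiff n 1 k a b * ((h 2 + h k) * Xsum n 2 k c d)))
      = (h 1 + h 2) * (\<Sum>k\<in>{3..i}. tens (Xdiff n 2 k) (Xsum n 1 k) a b c d - tens (Xdiff n 1 k) (Xsum n 2 k) a b c d)"
      unfolding sum_distrib_left by (intro sum.cong refl) (simp add: tens_def algebra_simps)
    then show ?thesis
      unfolding hw_vector_def by (simp add: tens_def field_simps)
  qed
  finally show "lact n (Hcart n h) (hw_vector n i) a b c d = (h 1 + h 2) * hw_vector n i a b c d" .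
qed

lemma hw_vector_entry: "hw_vector n i 2 1 1 (1+n) = 1/2"
proof -
  have "(\<Sum>k\<in>{3..i}. tens (Xdiff n 2 k) (Xsum n 1 k) 2 1 1 (1+n) - tens (Xdiff n 1 k) (Xsum n 2 k) 2 1 1 (1+n)) = 0"
    by (intro sum.neutral ballI) (auto simp: tens_def Xdiff_def msub_def Eunit_def)
  then show ?thesis
    unfolding hw_vector_def
    by (simp add: tens_def Xdiff_def msub_def Eunit_def X2eps_def Hcoroot21_def Xsum_def madd_def)
qed

end

theorem proposition5p3:
  fixes n i :: nat and c0 :: real
  assumes "3 \<le> n" and "2 \<le> i" and "i \<le> n - 1" and "0 < c0"
  defines "v \<equiv> pr_tens n i (tau2 n i c0 (madd (Xsum n 1 (i+1)) (Xdiff n 2 (i+1))))"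
  shows "v \<noteq> (\<lambda>_ _ _ _. 0)
    \<and> (\<forall>h. lact n (Hcart n h) v = (\<lambda>a b c d. (h 1 + h 2) * v a b c d))
    \<and> (\<forall>j\<in>{1..n} - {i}. lact n (simple_rv n j) v = (\<lambda>_ _ _ _. 0))"
proof -
  have i2: "2 \<le> i" and i1: "i + 1 \<le> n"
    using assms by auto
  have v: "v = (\<lambda>a b c d. (1 / complex_of_real c0) * hw_vector n i a b c d)"
    unfolding v_def Xmu_eps_def[symmetric] by (rule pr_tens_tau2_Xmu_eps[OF i2 i1])
  have "v 2 1 1 (1+n) = 1 / (2 * complex_of_real c0)"
    unfolding v hw_vector_entry[OF i2 i1] by simp
  then have "v \<noteq> (\<lambda>_ _ _ _. 0)"
    using \<open>0 < c0\<close> by auto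
  moreover have "lact n (Hcart n h) v = (\<lambda>a b c d. (h 1 + h 2) * v a b c d)" for h
    unfolding v lact_scale lact_Hcart_hw_vector[OF i2 i1] by (simp add: algebra_simps add_divide_distrib)
  moreover have "lact n (simple_rv n j) v = (\<lambda>_ _ _ _. 0)" if "j \<in> {1..n} - {i}" for j
    unfolding v lact_scale lact_simple_rv_hw_vector[OF i2 i1 that] by simp
  ultimately show ?thesis
    by auto
qed

end
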